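(* In the LHARG setting described in the context, fix integers $t<T$ and $z\in\mathbb{R}$. Define backward recursively for $s=T-1,\dots,t$, with terminal conditions $A_T=0$, $B_{T,i}=0$ ($i=1,\dots,p$), $C_{T,j}=0$ ($j=1,\dots,q$): $$X_{s+1}=z\lambda+B_{s+1,1}+\frac{\tfrac12z^2+\gamma^2C_{s+1,1}-2C_{s+1,1}\gamma z}{1-2C_{s+1,1}},$$ $$A_s=A_{s+1}+zr-\tfrac12\ln(1-2C_{s+1,1})-\delta\,w(X_{s+1},\theta)+d\,v(X_{s+1},\theta),$$ $$B_{s,i}=B_{s+1,i+1}+v(X_{s+1},\theta)\beta_i\ (1\le i\le p-1),\qquad B_{s,p}=v(X_{s+1},\theta)\beta_p,$$ $$C_{s,j}=C_{s+1,j+1}+v(X_{s+1},\theta)\alpha_j\ (1\le j\le q-1),\qquad C_{s,q}=v(X_{s+1},\theta)\alpha_q.$$ Assume that $1-2C_{s+1,1}>0$ and $\theta X_{s+1}<1$ for all $s=t,\dots,T-1$. Then $$\varphi^{\mathbb{P}}(t,T,z):=\mathbb{E}^{\mathbb{P}}\left[e^{z y_{t,T}}\mid\mathcal{F}_t\right]=\exp\Big(A_t+\sum_{i=1}^pB_{t,i}\mathrm{RV}_{t+1-i}+\sum_{j=1}^qC_{t,j}\ell_{t+1-j}\Big),$$ where $y_{t,T}=\ln(S_T/S_t)=\sum_{s=t+1}^Ty_s$.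
   Context: LHARG setting. Discrete time. $(\epsilon_t)$ are i.i.d. $\mathcal{N}(0,1)$ and $(\mathrm{RV}_t)$ is a positive process (realized variance); $\mathcal{F}_t$ is the $\sigma$-algebra generated by $\{\epsilon_u,\mathrm{RV}_u:u\le t\}$. Parameters: $r\in\mathbb{R}$ (risk-free rate), $\lambda\in\mathbb{R}$, $\delta>0$, $\theta>0$, $d\ge0$, $\gamma\in\mathbb{R}$, integers $p,q\ge1$, $\beta_1,\dots,\beta_p\ge0$, $\alpha_1,\dots,\alpha_q\ge0$. Leverage: $\ell_t=(\epsilon_t-\gamma\sqrt{\mathrm{RV}_t})^2$. Log-returns: $y_{t+1}=\ln(S_{t+1}/S_t)=r+\lambda\mathrm{RV}_{t+1}+\sqrt{\mathrm{RV}_{t+1}}\,\epsilon_{t+1}$, with $\epsilon_{t+1}$ independent of $(\mathcal{F}_t,\mathrm{RV}_{t+1})$. Conditionally on $\mathcal{F}_t$, $\mathrm{RV}_{t+1}$ has the noncentral gamma law $\bar\gamma(\delta,\Theta_t,\theta)$ with $\Theta_t=d+\sum_{i=1}^p\beta_i\mathrm{RV}_{t+1-i}+\sum_{j=1}^q\alpha_j\ell_{t+1-j}$. Here $\bar\gamma(\delta,\Theta,\theta)$ (shape $\delta$, noncentrality $\Theta\ge0$, scale $\theta$) is the law of $\theta G$ where, conditionally on $N\sim\mathrm{Poisson}(\Theta)$, $G\sim\mathrm{Gamma}(\delta+N,1)$; for $X\sim\bar\gamma(\delta,\Theta,\theta)$ and $\theta x<1$, $\mathbb{E}[e^{xX}]=\exp(-\delta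 w(x,\theta)+\Theta v(x,\theta))$, where $v(x,\theta)=\frac{\theta x}{1-\theta x}$ and $w(x,\theta)=\ln(1-\theta x)$. (In the heterogeneous LHARG model proper, $p=q=22$, $\beta_1=\beta_d$, $\beta_i=\beta_w/4$ for $2\le i\le5$, $\beta_i=\beta_m/17$ for $6\le i\le22$, and likewise $\alpha_1=\alpha_d$, $\alpha_j=\alpha_w/4$ for $2\le j\le 5$, $\alpha_j=\alpha_m/17$ for $6\le j\le 22$.) *)

theory Defs
  imports "HOL-Probability.Probability"
begin

text \<open>Functions v and w of the noncentral gamma moment generating function.\<close>
definition ncg_v :: "real \<Rightarrow> real \<Rightarrow> real" where
  "ncg_v x \<theta> = \<theta> * x / (1 - \<theta> * x)"

definition ncg_w :: "real \<Rightarrow> real \<Rightarrow> real" where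
  "ncg_w x \<theta> = ln (1 - \<theta> * x)"

text \<open>Noncentral gamma law with shape \<delta>, noncentrality \<Theta>, scale \<theta>:
  the law of \<theta> G where G | N ~ Gamma(\<delta>+N,1), N ~ Poisson(\<Theta>).\<close>
definition ncgamma_density :: "real \<Rightarrow> real \<Rightarrow> real \<Rightarrow> real \<Rightarrow> real" where
  "ncgamma_density \<delta> \<Theta> \<theta> x =
     (if 0 < x then
        (\<Sum>n. exp (- \<Theta>) * \<Theta> ^ n / fact n *
              ((x / \<theta>) powr (\<delta> + real n - 1) * exp (- x / \<theta>) / (Gamma (\<delta> + real n) * \<theta>)))
      else 0)"

definition ncgamma :: "real \<Rightarrow> real \<Rightarrow> real \<Rightarrow> real measure" where
  "ncgamma \<delta> \<Theta> \<theta> = density lborel (\<lambda>x. ennreal (ncgamma_density \<delta> \<Theta> \<theta> x))"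

definition rv_events :: "'a measure \<Rightarrow> ('a \<Rightarrow> real) \<Rightarrow> 'a set set" where
  "rv_events M X = {X -` B \<inter> space M | B. B \<in> sets borel}"

definition lharg_filtration ::
  "'a measure \<Rightarrow> (int \<Rightarrow> 'a \<Rightarrow> real) \<Rightarrow> (int \<Rightarrow> 'a \<Rightarrow> real) \<Rightarrow> int \<Rightarrow> 'a measure" where
  "lharg_filtration M eps RV t =
     sigma (space M) (\<Union>u\<in>{..t}. rv_events M (eps u) \<union> rv_events M (RV u))"

definition leverage :: "real \<Rightarrow> (int \<Rightarrow> 'a \<Rightarrow> real) \<Rightarrow> (int \<Rightarrow> 'a \<Rightarrow> real) \<Rightarrow> int \<Rightarrow> 'a \<Rightarrow> real" where
  "leverage \<gamma> eps RV t \<omega> = (eps t \<omega> - \<gamma> * sqrt (RV t \<omega>))\<^sup>2"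

definition lharg_Theta ::
  "real \<Rightarrow> real \<Rightarrow> nat \<Rightarrow> nat \<Rightarrow> (nat \<Rightarrow> real) \<Rightarrow> (nat \<Rightarrow> real) \<Rightarrow>
   (int \<Rightarrow> 'a \<Rightarrow> real) \<Rightarrow> (int \<Rightarrow> 'a \<Rightarrow> real) \<Rightarrow> int \<Rightarrow> 'a \<Rightarrow> real" where
  "lharg_Theta d \<gamma> p q \<beta> \<alpha> eps RV t \<omega> =
     d + (\<Sum>i=1..p. \<beta> i * RV (t + 1 - int i) \<omega>)
       + (\<Sum>j=1..q. \<alpha> j * leverage \<gamma> eps RV (t + 1 - int j) \<omega>)"

text \<open>Backward recursion. lharg_coef ... k gives (A_s, B_s, C_s) with k = T - s;
  B and C are indexed by 1..p resp. 1..q and set to 0 outside.\<close>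
definition lharg_X :: "real \<Rightarrow> real \<Rightarrow> real \<Rightarrow> real \<times> (nat \<Rightarrow> real) \<times> (nat \<Rightarrow> real) \<Rightarrow> real" where
  "lharg_X lam \<gamma> z c = (case c of (A, B, C) \<Rightarrow>
     z * lam + B 1 + ((1/2) * z\<^sup>2 + \<gamma>\<^sup>2 * C 1 - 2 * C 1 * \<gamma> * z) / (1 - 2 * C 1))"

fun lharg_coef ::
  "real \<Rightarrow> real \<Rightarrow> real \<Rightarrow> real \<Rightarrow> real \<Rightarrow> real \<Rightarrow> nat \<Rightarrow> nat \<Rightarrow> (nat \<Rightarrow> real) \<Rightarrow> (nat \<Rightarrow> real)
   \<Rightarrow> real \<Rightarrow> nat \<Rightarrow> real \<times> (nat \<Rightarrow> real) \<times> (nat \<Rightarrow> real)" where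
  "lharg_coef r lam \<delta> \<theta> d \<gamma> p q \<beta> \<alpha> z 0 = (0, (\<lambda>_. 0), (\<lambda>_. 0))"
| "lharg_coef r lam \<delta> \<theta> d \<gamma> p q \<beta> \<alpha> z (Suc k) =
     (let c = lharg_coef r lam \<delta> \<theta> d \<gamma> p q \<beta> \<alpha> z k;
          A = fst c; B = fst (snd c); C = snd (snd c);
          X = lharg_X lam \<gamma> z c
      in (A + z * r - (1/2) * ln (1 - 2 * C 1) - \<delta> * ncg_w X \<theta> + d * ncg_v X \<theta>,
          (\<lambda>i. if 1 \<le> i \<and> i < p then B (i + 1) + ncg_v X \<theta> * \<beta> i
               else if i = p then ncg_v X \<theta> * \<beta> p else 0),
          (\<lambda>j. if 1 \<le> j \<and> j < q then C (j + 1) + ncg_v X \<theta> * \<alpha> j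
               else if j = q then ncg_v X \<theta> * \<alpha> q else 0)))"

end

theory Submission
  imports Defs
begin

text \<open>
  The proof is a backward induction on T - t through the tower property.  Condition first on
  the information at time s enlarged by RV(s+1): the innovation eps(s+1) is then an independent
  standard normal, and completing the square (which needs 1 - 2 C(s+1,1) > 0) integrates out the
  quadratic leverage term, leaving exp(X(s+1) RV(s+1)).  Next, RV(s+1) given the past is
  noncentral gamma, a Poisson mixture of gamma laws, whose moment generating function
  exp(-\<delta> w + \<Theta> v) is finite for \<theta> X(s+1) < 1.  Since \<Theta> is affine in the lagged
  RV and leverage terms, the exponent stays affine and its coefficients move down one lag,
  which is exactly the recursion for A, B and C.
\<close>

section \<open>Moment generating functions\<close>

lemma nn_integral_normal_density:
  assumes "\<sigma> > 0"
  shows "(\<integral>\<^sup>+x. ennreal (normal_density \<mu> \<sigma> x) \<partial>lborel) = 1"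
proof -
  interpret prob_space "density lborel (normal_density \<mu> \<sigma>)"
    by (rule prob_space_normal_density) fact
  show ?thesis using emeasure_space_1 by (simp add: emeasure_density)
qed

lemma nn_integral_std_normal_exp_quadratic:
  fixes b c :: real
  assumes "c < 1/2"
  shows "(\<integral>\<^sup>+x. ennreal (std_normal_density x * exp (b * x + c * x\<^sup>2)) \<partial>lborel)
       = ennreal (exp (b\<^sup>2 / (2 * (1 - 2 * c)) - ln (1 - 2 * c) / 2))"
proof -
  define D where "D = 1 - 2 * c"
  have D: "D > 0" using assms by (simp add: D_def)
  define \<sigma> where "\<sigma> = exp (- ln D / 2)"
  define \<mu> where "\<mu> = b / D"
  have \<sigma>: "\<sigma> > 0" "\<sigma>\<^sup>2 = 1 / D"
    using D by (simp_all add: \<sigma>_def power2_eq_square exp_add[symmetric] exp_minus inverse_eq_divide)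
  have completed_square: "- x\<^sup>2 / 2 + (b * x + c * x\<^sup>2) = b\<^sup>2 / (2 * D) - (x - \<mu>)\<^sup>2 / (2 * \<sigma>\<^sup>2)" for x
  proof -
    have c: "c = (1 - D) / 2" by (simp add: D_def)
    show ?thesis using D unfolding \<sigma>(2) \<mu>_def c by (simp add: field_simps power2_eq_square)
  qed
  have "std_normal_density x * exp (b * x + c * x\<^sup>2)
      = exp (b\<^sup>2 / (2 * D) - ln D / 2) * normal_density \<mu> \<sigma> x" for x
  proof -
    have "sqrt (2 * pi * \<sigma>\<^sup>2) = sqrt (2 * pi) * \<sigma>" using \<sigma>(1) by (simp add: real_sqrt_mult)
    moreover have "exp (- x\<^sup>2 / 2) * exp (b * x + c * x\<^sup>2) = exp (b\<^sup>2 / (2 * D)) * exp (- (x - \<mu>)\<^sup>2 / (2 * \<sigma>\<^sup>2))"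
      unfolding exp_add[symmetric] completed_square by simp
    moreover have "exp (b\<^sup>2 / (2 * D) - ln D / 2) = exp (b\<^sup>2 / (2 * D)) * \<sigma>"
      by (simp add: \<sigma>_def exp_add[symmetric])
    ultimately show ?thesis
      using \<sigma>(1) unfolding normal_density_def by (simp add: field_simps)
  qed
  then have "(\<integral>\<^sup>+x. ennreal (std_normal_density x * exp (b * x + c * x\<^sup>2)) \<partial>lborel)
      = (\<integral>\<^sup>+x. ennreal (exp (b\<^sup>2 / (2 * D) - ln D / 2)) * ennreal (normal_density \<mu> \<sigma> x) \<partial>lborel)"
    by (simp add: ennreal_mult normal_density_nonneg)
  also have "\<dots> = ennreal (exp (b\<^sup>2 / (2 * D) - ln D / 2))"
    by (simp add: nn_integral_cmult nn_integral_normal_density \<sigma>(1))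
  finally show ?thesis by (simp add: D_def)
qed

lemma nn_integral_std_normal_return_leverage:
  fixes y z r lam b c \<gamma> :: real
  assumes y: "y \<ge> 0" and c: "1 - 2 * c > 0"
  defines "X \<equiv> z * lam + b + ((1/2) * z\<^sup>2 + \<gamma>\<^sup>2 * c - 2 * c * \<gamma> * z) / (1 - 2 * c)"
  shows "(\<integral>\<^sup>+x. ennreal (exp (z * r + (z * lam + b) * y + z * sqrt y * x + c * (x - \<gamma> * sqrt y)\<^sup>2))
            \<partial>density lborel std_normal_density)
       = ennreal (exp (z * r - ln (1 - 2 * c) / 2 + X * y))"
proof -
  define s where "s = sqrt y"
  have s: "s \<ge> 0" "y = s\<^sup>2" using y by (simp_all add: s_def)
  define b' where "b' = s * (z - 2 * c * \<gamma>)"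
  define K where "K = z * r + (z * lam + b) * y + c * \<gamma>\<^sup>2 * y"
  have exponent: "z * r + (z * lam + b) * y + z * sqrt y * x + c * (x - \<gamma> * sqrt y)\<^sup>2 = K + (b' * x + c * x\<^sup>2)" for x
    unfolding K_def b'_def s_def[symmetric] s(2) using s(1) by (simp add: power2_eq_square algebra_simps)
  have "K + b'\<^sup>2 / (2 * (1 - 2 * c)) = z * r + X * y"
  proof -
    define D where "D = 1 - 2 * c"
    have D: "D > 0" using c by (simp add: D_def)
    have c_eq: "c = (1 - D) / 2" by (simp add: D_def)
    have b'_sq: "b'\<^sup>2 = y * (z - 2 * c * \<gamma>)\<^sup>2" unfolding b'_def s(2) by (simp add: power_mult_distrib)
    show ?thesis
      unfolding K_def X_def b'_sq D_def[symmetric] unfolding c_eq using D by (simp add: field_simps power2_eq_square)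
  qed
  then have "exp K * exp (b'\<^sup>2 / (2 * (1 - 2 * c)) - ln (1 - 2 * c) / 2) = exp (z * r - ln (1 - 2 * c) / 2 + X * y)"
    by (simp add: exp_add[symmetric] algebra_simps)
  moreover have "(\<integral>\<^sup>+x. ennreal (exp (z * r + (z * lam + b) * y + z * sqrt y * x + c * (x - \<gamma> * sqrt y)\<^sup>2))
            \<partial>density lborel std_normal_density)
      = (\<integral>\<^sup>+x. ennreal (std_normal_density x) * ennreal (exp (K + (b' * x + c * x\<^sup>2))) \<partial>lborel)"
    unfolding exponent by (rule nn_integral_density) auto
  moreover have "ennreal (std_normal_density x) * ennreal (exp (K + (b' * x + c * x\<^sup>2)))
      = ennreal (exp K) * ennreal (std_normal_density x * exp (b' * x + c * x\<^sup>2))" for x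
    unfolding exp_add by (simp add: ennreal_mult[symmetric] normal_density_nonneg mult_ac)
  moreover have "(\<integral>\<^sup>+x. ennreal (exp K) * ennreal (std_normal_density x * exp (b' * x + c * x\<^sup>2)) \<partial>lborel)
      = ennreal (exp K) * ennreal (exp (b'\<^sup>2 / (2 * (1 - 2 * c)) - ln (1 - 2 * c) / 2))"
    using c by (simp add: nn_integral_cmult nn_integral_std_normal_exp_quadratic)
  ultimately show ?thesis by (simp add: ennreal_mult[symmetric])
qed

lemma nn_integral_gamma_density_exp:
  fixes a \<theta> X :: real
  assumes a: "a > 0" and \<theta>: "\<theta> > 0" and X: "\<theta> * X < 1"
  shows "(\<integral>\<^sup>+x. ennreal (indicator {0<..} x * ((x / \<theta>) powr (a - 1) * exp (- x / \<theta>) / (Gamma a * \<theta>))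
                      * exp (X * x)) \<partial>lborel)
       = ennreal ((1 - \<theta> * X) powr (- a))"
proof -
  define D where "D = 1 - \<theta> * X"
  have D: "D > 0" using X by (simp add: D_def)
  define c where "c = \<theta> / D"
  have c: "c > 0" using D \<theta> by (simp add: c_def)
  have G: "Gamma a > 0" using a by (simp add: Gamma_real_pos)
  define f where "f x = ennreal (indicator {0<..} x * ((x / \<theta>) powr (a - 1) * exp (- x / \<theta>) / (Gamma a * \<theta>))
                                 * exp (X * x))" for x
  have f_meas[measurable]: "f \<in> borel_measurable borel" unfolding f_def by measurable
  have scaled: "ennreal c * f (c * x)
      = ennreal (1 / (Gamma a * D powr a)) * ennreal (indicator {0..} x * x powr (a - 1) / exp x)" for x
  proof (cases "x > 0")
    case True
    have "- (c * x) / \<theta> + X * (c * x) = - x * (1 - \<theta> * X) / D"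
      using \<theta> D by (simp add: c_def field_simps)
    then have "exp (- (c * x) / \<theta>) * exp (X * (c * x)) = exp (- x)"
      using D by (simp add: D_def[symmetric] exp_add[symmetric])
    moreover have "(c * x / \<theta>) powr (a - 1) = x powr (a - 1) / D powr (a - 1)"
      using \<theta> D by (simp add: c_def powr_divide)
    moreover have "D powr a = D powr (a - 1) * D" using D by (simp add: powr_diff)
    ultimately have "c * ((c * x / \<theta>) powr (a - 1) * exp (- (c * x) / \<theta>) / (Gamma a * \<theta>) * exp (X * (c * x)))
        = 1 / (Gamma a * D powr a) * (x powr (a - 1) / exp x)"
      using \<theta> D G by (simp add: c_def exp_minus field_simps)
    then show ?thesis
      using True c G D by (simp add: f_def ennreal_mult'[symmetric] ennreal_mult[symmetric])
  next
    case False
    then show ?thesis using c by (cases "x = 0") (auto simp: f_def indicator_def zero_less_mult_iff)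
  qed
  have "(\<integral>\<^sup>+x. f x \<partial>lborel) = ennreal \<bar>c\<bar> * (\<integral>\<^sup>+x. f (0 + c * x) \<partial>lborel)"
    by (rule nn_integral_real_affine[OF f_meas]) (use c in simp)
  also have "\<dots> = (\<integral>\<^sup>+x. ennreal c * f (c * x) \<partial>lborel)"
    using c by (simp add: nn_integral_cmult)
  also have "\<dots> = ennreal (1 / (Gamma a * D powr a)) * ennreal (Gamma a)"
    by (simp add: scaled nn_integral_cmult Gamma_conv_nn_integral_real[OF a])
  also have "\<dots> = ennreal (D powr (- a))"
    using G D by (simp add: ennreal_mult[symmetric] powr_minus field_simps)
  finally show ?thesis by (simp add: f_def D_def)
qed

lemma suminf_poisson_weighted_powr:
  fixes \<delta> \<Theta> D :: real
  assumes D: "D > 0" and \<Theta>: "\<Theta> \<ge> 0"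
  shows "(\<Sum>n. ennreal (exp (- \<Theta>) * \<Theta> ^ n / fact n) * ennreal (D powr (- (\<delta> + real n))))
       = ennreal (exp (- \<delta> * ln D + \<Theta> * (1 / D - 1)))"
proof -
  define K where "K = exp (- \<Theta>) * D powr (- \<delta>)"
  have term_eq: "ennreal (exp (- \<Theta>) * \<Theta> ^ n / fact n) * ennreal (D powr (- (\<delta> + real n)))
      = ennreal (K * ((\<Theta> / D) ^ n /\<^sub>R fact n))" for n
  proof -
    have "D powr (- (\<delta> + real n)) = D powr (- \<delta>) * D powr (- real n)"
      by (simp add: powr_add[symmetric])
    also have "D powr (- real n) = 1 / D ^ n" using D by (simp add: powr_minus powr_realpow divide_inverse)
    finally have "D powr (- (\<delta> + real n)) = D powr (- \<delta>) / D ^ n" by simp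
    then show ?thesis using D \<Theta> by (simp add: K_def ennreal_mult[symmetric] power_divide field_simps)
  qed
  have "(\<lambda>n. K * ((\<Theta> / D) ^ n /\<^sub>R fact n)) sums (K * exp (\<Theta> / D))"
    by (intro sums_mult exp_converges)
  then have "(\<Sum>n. ennreal (K * ((\<Theta> / D) ^ n /\<^sub>R fact n))) = ennreal (K * exp (\<Theta> / D))"
    by (rule suminf_ennreal_eq[rotated]) (use D \<Theta> in \<open>simp add: K_def\<close>)
  moreover have "K * exp (\<Theta> / D) = exp (- \<delta> * ln D + \<Theta> * (1 / D - 1))"
    using D by (simp add: K_def powr_def exp_add[symmetric] algebra_simps)
  ultimately show ?thesis unfolding term_eq by simp
qed

definition poisson_gamma_term :: "real \<Rightarrow> real \<Rightarrow> real \<Rightarrow> nat \<Rightarrow> real \<Rightarrow> real" where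
  "poisson_gamma_term \<delta> \<Theta> \<theta> n x = exp (- \<Theta>) * \<Theta> ^ n / fact n *
     (indicator {0<..} x * ((x / \<theta>) powr (\<delta> + real n - 1) * exp (- x / \<theta>) / (Gamma (\<delta> + real n) * \<theta>)))"

lemma poisson_gamma_term_nonneg:
  assumes "\<delta> > 0" "\<theta> > 0" "\<Theta> \<ge> 0"
  shows "poisson_gamma_term \<delta> \<Theta> \<theta> n x \<ge> 0"
  using assms Gamma_real_pos[of "\<delta> + real n"]
  by (simp add: poisson_gamma_term_def indicator_def)

lemma nn_integral_poisson_gamma_mixture_exp:
  fixes \<delta> \<theta> \<Theta> X :: real
  assumes \<delta>: "\<delta> > 0" and \<theta>: "\<theta> > 0" and \<Theta>: "\<Theta> \<ge> 0" and X: "\<theta> * X < 1"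
  shows "(\<integral>\<^sup>+x. (\<Sum>n. ennreal (poisson_gamma_term \<delta> \<Theta> \<theta> n x)) * ennreal (exp (X * x)) \<partial>lborel)
       = ennreal (exp (- \<delta> * ncg_w X \<theta> + \<Theta> * ncg_v X \<theta>))"
proof -
  define w where "w n = exp (- \<Theta>) * \<Theta> ^ n / fact n" for n
  define g where "g n x = indicator {0<..} x * ((x / \<theta>) powr (\<delta> + real n - 1)
                             * exp (- x / \<theta>) / (Gamma (\<delta> + real n) * \<theta>)) * exp (X * x)" for n x
  have w: "w n \<ge> 0" for n using \<Theta> by (simp add: w_def)
  have term_integral: "(\<integral>\<^sup>+x. ennreal (poisson_gamma_term \<delta> \<Theta> \<theta> n x * exp (X * x)) \<partial>lborel)
      = ennreal (w n) * ennreal ((1 - \<theta> * X) powr (- (\<delta> + real n)))" for n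
  proof -
    have "poisson_gamma_term \<delta> \<Theta> \<theta> n x * exp (X * x) = w n * g n x" for x
      unfolding poisson_gamma_term_def w_def g_def by (simp only: mult.assoc)
    then have "(\<integral>\<^sup>+x. ennreal (poisson_gamma_term \<delta> \<Theta> \<theta> n x * exp (X * x)) \<partial>lborel)
        = (\<integral>\<^sup>+x. ennreal (w n) * ennreal (g n x) \<partial>lborel)"
      using w by (simp only: ennreal_mult')
    also have "\<dots> = ennreal (w n) * (\<integral>\<^sup>+x. ennreal (g n x) \<partial>lborel)"
      by (rule nn_integral_cmult) (simp add: g_def)
    also have "(\<integral>\<^sup>+x. ennreal (g n x) \<partial>lborel) = ennreal ((1 - \<theta> * X) powr (- (\<delta> + real n)))"
      unfolding g_def using \<delta> by (intro nn_integral_gamma_density_exp \<theta> X add_pos_nonneg) auto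
    finally show ?thesis .
  qed
  have "(\<integral>\<^sup>+x. (\<Sum>n. ennreal (poisson_gamma_term \<delta> \<Theta> \<theta> n x)) * ennreal (exp (X * x)) \<partial>lborel)
      = (\<integral>\<^sup>+x. (\<Sum>n. ennreal (poisson_gamma_term \<delta> \<Theta> \<theta> n x * exp (X * x))) \<partial>lborel)"
    by (simp only: ennreal_suminf_multc[symmetric] ennreal_mult[OF poisson_gamma_term_nonneg[OF \<delta> \<theta> \<Theta>] exp_ge_zero])
  also have "\<dots> = (\<Sum>n. \<integral>\<^sup>+x. ennreal (poisson_gamma_term \<delta> \<Theta> \<theta> n x * exp (X * x)) \<partial>lborel)"
    by (rule nn_integral_suminf) (simp add: poisson_gamma_term_def)
  also have "\<dots> = (\<Sum>n. ennreal (exp (- \<Theta>) * \<Theta> ^ n / fact n) * ennreal ((1 - \<theta> * X) powr (- (\<delta> + real n))))"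
    by (simp only: term_integral w_def)
  also have "\<dots> = ennreal (exp (- \<delta> * ln (1 - \<theta> * X) + \<Theta> * (1 / (1 - \<theta> * X) - 1)))"
    using X \<Theta> by (intro suminf_poisson_weighted_powr) auto
  also have "- \<delta> * ln (1 - \<theta> * X) + \<Theta> * (1 / (1 - \<theta> * X) - 1) = - \<delta> * ncg_w X \<theta> + \<Theta> * ncg_v X \<theta>"
    using X by (simp add: ncg_w_def ncg_v_def field_simps)
  finally show ?thesis .
qed

lemma ncgamma_mgf:
  fixes \<delta> \<theta> \<Theta> X :: real
  assumes \<delta>: "\<delta> > 0" and \<theta>: "\<theta> > 0" and \<Theta>: "\<Theta> \<ge> 0" and X: "\<theta> * X < 1"
  shows "(\<integral>\<^sup>+x. ennreal (exp (X * x)) \<partial>ncgamma \<delta> \<Theta> \<theta>) = ennreal (exp (- \<delta> * ncg_w X \<theta> + \<Theta> * ncg_v X \<theta>))"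
proof -
  define S where "S x = (\<Sum>n. ennreal (poisson_gamma_term \<delta> \<Theta> \<theta> n x))" for x
  have S_meas: "S \<in> borel_measurable lborel" unfolding S_def poisson_gamma_term_def by measurable
  \<comment> \<open>The mixture has total mass one, so the series converges almost everywhere and equals the density.\<close>
  have "(\<integral>\<^sup>+x. S x \<partial>lborel) = 1"
    using nn_integral_poisson_gamma_mixture_exp[OF \<delta> \<theta> \<Theta>, of 0] \<theta>
    by (simp add: S_def ncg_w_def ncg_v_def)
  then have "AE x in lborel. S x \<noteq> \<infinity>" by (intro nn_integral_noteq_infinite[OF S_meas]) simp
  then have density_eq: "AE x in lborel. ennreal (ncgamma_density \<delta> \<Theta> \<theta> x) = S x"
  proof eventually_elim
    case (elim x)
    show ?case
    proof (cases "x > 0")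
      case True
      have "S x = ennreal (\<Sum>n. poisson_gamma_term \<delta> \<Theta> \<theta> n x)"
        unfolding S_def
        by (rule suminf_ennreal) (use elim poisson_gamma_term_nonneg[OF \<delta> \<theta> \<Theta>] in \<open>auto simp: S_def\<close>)
      then show ?thesis
        using True by (simp add: ncgamma_density_def poisson_gamma_term_def mult_ac)
    qed (simp add: S_def ncgamma_density_def poisson_gamma_term_def)
  qed
  have "(\<integral>\<^sup>+x. ennreal (exp (X * x)) \<partial>ncgamma \<delta> \<Theta> \<theta>)
      = (\<integral>\<^sup>+x. ennreal (ncgamma_density \<delta> \<Theta> \<theta> x) * ennreal (exp (X * x)) \<partial>lborel)"
    unfolding ncgamma_def by (rule nn_integral_density) (simp_all add: ncgamma_density_def, measurable)
  also have "\<dots> = (\<integral>\<^sup>+x. S x * ennreal (exp (X * x)) \<partial>lborel)"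
    by (rule nn_integral_cong_AE) (use density_eq in auto)
  also have "\<dots> = ennreal (exp (- \<delta> * ncg_w X \<theta> + \<Theta> * ncg_v X \<theta>))"
    unfolding S_def by (rule nn_integral_poisson_gamma_mixture_exp[OF \<delta> \<theta> \<Theta> X])
  finally show ?thesis .
qed

lemma nn_integral_ncgamma_exp_affine:
  assumes "\<delta> > 0" "\<theta> > 0" "\<Theta> \<ge> 0" "\<theta> * X < 1"
  shows "(\<integral>\<^sup>+x. ennreal (exp (a + X * x)) \<partial>ncgamma \<delta> \<Theta> \<theta>)
       = ennreal (exp (a - \<delta> * ncg_w X \<theta> + \<Theta> * ncg_v X \<theta>))"
proof -
  have "(\<integral>\<^sup>+x. ennreal (exp (a + X * x)) \<partial>ncgamma \<delta> \<Theta> \<theta>)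
      = ennreal (exp a) * (\<integral>\<^sup>+x. ennreal (exp (X * x)) \<partial>ncgamma \<delta> \<Theta> \<theta>)"
    unfolding exp_add ennreal_mult'[OF exp_ge_zero]
    by (rule nn_integral_cmult) (simp add: ncgamma_def)
  then show ?thesis
    using ncgamma_mgf[OF assms]
    by (simp add: ennreal_mult[symmetric] exp_add[symmetric] algebra_simps)
qed

section \<open>Conditional expectations\<close>

lemma (in sigma_finite_subalgebra) nn_cond_exp_monotone_convergence_SUP:
  assumes f_meas[measurable]: "\<And>i. f i \<in> borel_measurable M"
    and mono: "\<And>i x. f i x \<le> f (Suc i) x"
  shows "AE x in M. nn_cond_exp M F (\<lambda>x. SUP i. f i x) x = (SUP i. nn_cond_exp M F (f i) x)"
proof -
  have AE_mono: "AE x in M. nn_cond_exp M F (f i) x \<le> nn_cond_exp M F (f (Suc i)) x" for i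
    by (rule nn_cond_exp_mono) (auto simp: mono)
  have "AE x in M. (SUP i. nn_cond_exp M F (f i) x) = nn_cond_exp M F (\<lambda>x. SUP i. f i x) x"
  proof (rule nn_cond_exp_charact)
    fix A assume A[measurable]: "A \<in> sets F"
    then have [measurable]: "A \<in> sets M" using subalg by (meson subalgebra_def subsetD)
    have "(\<integral>\<^sup>+x\<in>A. (SUP i. f i x) \<partial>M) = (SUP i. \<integral>\<^sup>+x. f i x * indicator A x \<partial>M)"
      by (simp add: SUP_mult_right_ennreal nn_integral_monotone_convergence_SUP_AE mult_right_mono mono)
    also have "\<dots> = (SUP i. \<integral>\<^sup>+x. nn_cond_exp M F (f i) x * indicator A x \<partial>M)"
      using nn_cond_exp_intg[of "indicator A" "f _"] by (simp add: mult.commute)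
    also have "\<dots> = (\<integral>\<^sup>+x\<in>A. (SUP i. nn_cond_exp M F (f i) x) \<partial>M)"
    proof -
      have "AE x in M. nn_cond_exp M F (f i) x * indicator A x \<le> nn_cond_exp M F (f (Suc i)) x * indicator A x" for i
        using AE_mono[of i] by eventually_elim (auto intro: mult_right_mono)
      then show ?thesis
        by (simp add: SUP_mult_right_ennreal nn_integral_monotone_convergence_SUP_AE)
    qed
    finally show "(\<integral>\<^sup>+x\<in>A. (SUP i. f i x) \<partial>M) = (\<integral>\<^sup>+x\<in>A. (SUP i. nn_cond_exp M F (f i) x) \<partial>M)" .
  qed auto
  then show ?thesis by (auto elim: AE_mp)
qed

lemma (in sigma_finite_subalgebra) nn_cond_exp_kernel_comp:
  fixes Y :: "'a \<Rightarrow> real" and K :: "'a \<Rightarrow> real measure"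
  assumes Y[measurable]: "Y \<in> borel_measurable M"
    and sets_K: "\<And>\<omega>. sets (K \<omega>) = sets borel"
    and cond_law: "\<And>B. B \<in> sets borel \<Longrightarrow>
      AE \<omega> in M. nn_cond_exp M F (indicator (Y -` B \<inter> space M)) \<omega> = emeasure (K \<omega>) B"
    and g: "g \<in> borel_measurable borel"
  shows "AE \<omega> in M. nn_cond_exp M F (\<lambda>\<omega>. g (Y \<omega>)) \<omega> = (\<integral>\<^sup>+x. g x \<partial>K \<omega>)"
  using g
proof (induction rule: borel_measurable_induct)
  have K_meas: "h \<in> borel_measurable (K \<omega>)" if "h \<in> borel_measurable borel" for h :: "real \<Rightarrow> ennreal" and \<omega>
    using that by (simp add: measurable_cong_sets[OF sets_K refl])
  {
    case (cong f g)
    then have "f = g" by auto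
    with cong show ?case by simp
  next
    case (set A)
    then have [measurable]: "A \<in> sets borel" by simp
    have "AE \<omega> in M. nn_cond_exp M F (\<lambda>\<omega>. indicator A (Y \<omega>)) \<omega> = nn_cond_exp M F (indicator (Y -` A \<inter> space M)) \<omega>"
      by (rule nn_cond_exp_cong) (auto simp: indicator_def)
    with cond_law[OF \<open>A \<in> sets borel\<close>] show ?case
      using sets_K by (auto elim!: AE_mp)
  next
    case (mult u c)
    note [measurable] = \<open>u \<in> borel_measurable borel\<close>
    have "AE \<omega> in M. c * nn_cond_exp M F (\<lambda>\<omega>. u (Y \<omega>)) \<omega> = nn_cond_exp M F (\<lambda>\<omega>. c * u (Y \<omega>)) \<omega>"
      by (rule nn_cond_exp_prod) auto
    with mult.IH show ?case
      by eventually_elim (simp add: nn_integral_cmult K_meas)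
  next
    case (add u v)
    note [measurable] = \<open>u \<in> borel_measurable borel\<close> \<open>v \<in> borel_measurable borel\<close>
    have "AE \<omega> in M. nn_cond_exp M F (\<lambda>\<omega>. v (Y \<omega>)) \<omega> + nn_cond_exp M F (\<lambda>\<omega>. u (Y \<omega>)) \<omega>
        = nn_cond_exp M F (\<lambda>\<omega>. v (Y \<omega>) + u (Y \<omega>)) \<omega>"
      by (rule nn_cond_exp_sum) auto
    with add.IH show ?case
      by eventually_elim (simp add: nn_integral_add K_meas)
  next
    case (seq U)
    note [measurable] = \<open>\<And>i. U i \<in> borel_measurable borel\<close>
    have "AE \<omega> in M. nn_cond_exp M F (\<lambda>\<omega>. SUP i. U i (Y \<omega>)) \<omega> = (SUP i. nn_cond_exp M F (\<lambda>\<omega>. U i (Y \<omega>)) \<omega>)"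
      using \<open>incseq U\<close>
      by (intro nn_cond_exp_monotone_convergence_SUP) (auto simp: incseq_Suc_iff le_fun_def)
    moreover have "AE \<omega> in M. \<forall>i. nn_cond_exp M F (\<lambda>\<omega>. U i (Y \<omega>)) \<omega> = (\<integral>\<^sup>+x. U i x \<partial>K \<omega>)"
      using seq.IH by (simp add: AE_all_countable)
    ultimately show ?case
    proof eventually_elim
      case (elim \<omega>)
      have "(\<integral>\<^sup>+x. (SUP i. U i) x \<partial>K \<omega>) = (SUP i. \<integral>\<^sup>+x. U i x \<partial>K \<omega>)"
        unfolding SUP_apply by (rule nn_integral_monotone_convergence_SUP[OF \<open>incseq U\<close> K_meas]) measurable
      with elim show ?case by (simp only: SUP_apply)
    qed
  }
qed

lemma (in prob_space) indep_var_if_indep_set: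
  assumes "indep_set A B"
    and "\<And>S. S \<in> sets N \<Longrightarrow> X -` S \<inter> space M \<in> A" "\<And>S. S \<in> sets N \<Longrightarrow> Y -` S \<inter> space M \<in> B"
    and "random_variable N X" "random_variable N Y"
  shows "indep_var N X N Y"
  unfolding indep_var_def indep_vars_def2
proof (intro conjI ballI)
  show "random_variable (case_bool N N i) (case_bool X Y i)" for i
    using assms(4,5) by (cases i) auto
  show "indep_sets (\<lambda>i. {case_bool X Y i -` S \<inter> space M |S. S \<in> sets (case_bool N N i)}) UNIV"
    using assms(1) unfolding indep_set_def
    by (rule indep_sets_mono_sets) (use assms(2,3) in \<open>auto split: bool.split\<close>)
qed

lemma (in prob_space) nn_integral_indep_var:
  assumes indep: "indep_var N X N Y" and \<phi>[measurable]: "\<phi> \<in> borel_measurable (N \<Otimes>\<^sub>M N)"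
  shows "(\<integral>\<^sup>+\<omega>. \<phi> (X \<omega>, Y \<omega>) \<partial>M) = (\<integral>\<^sup>+\<omega>. \<integral>\<^sup>+y. \<phi> (X \<omega>, y) \<partial>distr M N Y \<partial>M)"
proof -
  have [measurable]: "X \<in> measurable M N" "Y \<in> measurable M N"
    using indep by (auto dest: indep_var_rv1 indep_var_rv2)
  interpret Y: prob_space "distr M N Y" by (rule prob_space_distr) simp
  have \<phi>': "\<phi> \<in> borel_measurable (distr M N X \<Otimes>\<^sub>M distr M N Y)"
    by (simp add: measurable_cong_sets[OF sets_pair_measure_cong[OF sets_distr sets_distr] refl])
  have "(\<integral>\<^sup>+\<omega>. \<phi> (X \<omega>, Y \<omega>) \<partial>M) = (\<integral>\<^sup>+z. \<phi> z \<partial>distr M (N \<Otimes>\<^sub>M N) (\<lambda>\<omega>. (X \<omega>, Y \<omega>)))"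
    by (rule nn_integral_distr[symmetric]) auto
  also have "\<dots> = (\<integral>\<^sup>+z. \<phi> z \<partial>(distr M N X \<Otimes>\<^sub>M distr M N Y))"
    using indep by (simp add: indep_var_distribution_eq)
  also have "\<dots> = (\<integral>\<^sup>+x. \<integral>\<^sup>+y. \<phi> (x, y) \<partial>distr M N Y \<partial>distr M N X)"
    by (rule Y.nn_integral_fst[OF \<phi>', symmetric])
  also have "\<dots> = (\<integral>\<^sup>+\<omega>. \<integral>\<^sup>+y. \<phi> (X \<omega>, y) \<partial>distr M N Y \<partial>M)"
    by (rule nn_integral_distr)
       (simp_all add: measurable_cong_sets[OF sets_distr refl] Y.borel_measurable_nn_integral
          measurable_cong_sets[OF sets_pair_measure_cong[OF refl sets_distr] refl])
  finally show ?thesis .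
qed

lemma (in prob_space) indep_var_subalgebra_embedding:
  fixes W :: "'a \<Rightarrow> real \<times> real" and e :: "'a \<Rightarrow> real"
  assumes sub: "subalgebra M G" and indep: "indep_set (sets G) (rv_events M e)"
    and W: "W \<in> measurable G (borel \<Otimes>\<^sub>M borel)" and e[measurable]: "e \<in> borel_measurable M"
  shows "indep_var (borel \<Otimes>\<^sub>M borel) W (borel \<Otimes>\<^sub>M borel) (\<lambda>\<omega>. (e \<omega>, 0::real))"
proof (rule indep_var_if_indep_set[OF indep])
  show "W -` S \<inter> space M \<in> sets G" if "S \<in> sets (borel \<Otimes>\<^sub>M borel)" for S
    using measurable_sets[OF W that] sub by (simp add: subalgebra_def)
  show "(\<lambda>\<omega>. (e \<omega>, 0::real)) -` S \<inter> space M \<in> rv_events M e" if "S \<in> sets (borel \<Otimes>\<^sub>M borel)" for S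
  proof -
    have "(\<lambda>x::real. (x, 0::real)) -` S \<in> sets borel"
      using measurable_sets_borel[OF _ that, of "\<lambda>x::real. (x, 0::real)"] by measurable
    moreover have "(\<lambda>\<omega>. (e \<omega>, 0::real)) -` S \<inter> space M = e -` ((\<lambda>x. (x, 0)) -` S) \<inter> space M"
      by auto
    ultimately show ?thesis unfolding rv_events_def by blast
  qed
  show "random_variable (borel \<Otimes>\<^sub>M borel) W" by (rule measurable_from_subalg[OF sub W])
  show "random_variable (borel \<Otimes>\<^sub>M borel) (\<lambda>\<omega>. (e \<omega>, 0::real))" by measurable
qed

lemma nn_cond_exp_indep_freeze:
  fixes Y e :: "'a \<Rightarrow> real" and g :: "real \<times> real \<Rightarrow> ennreal"
  assumes "prob_space M" and sub: "subalgebra M G"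
    and Y[measurable]: "Y \<in> borel_measurable G" and e[measurable]: "e \<in> borel_measurable M"
    and indep: "prob_space.indep_set M (sets G) (rv_events M e)"
    and g[measurable]: "g \<in> borel_measurable (borel \<Otimes>\<^sub>M borel)"
  shows "AE \<omega> in M. nn_cond_exp M G (\<lambda>\<omega>. g (Y \<omega>, e \<omega>)) \<omega> = (\<integral>\<^sup>+x. g (Y \<omega>, x) \<partial>distr M borel e)"
proof -
  interpret prob_space M by fact
  interpret finite_measure_subalgebra M G by unfold_locales (rule sub)
  let ?N = "distr M borel e"
  interpret N: prob_space ?N by (rule prob_space_distr) simp
  have [measurable]: "Y \<in> borel_measurable M" by (rule measurable_from_subalg[OF sub Y])
  define \<psi> where "\<psi> y = (\<integral>\<^sup>+x. g (y, x) \<partial>?N)" for y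
  have [measurable]: "\<psi> \<in> borel_measurable borel"
    unfolding \<psi>_def by (rule N.borel_measurable_nn_integral)
      (simp add: measurable_cong_sets[OF sets_pair_measure_cong[OF refl sets_distr] refl])
  have "AE \<omega> in M. \<psi> (Y \<omega>) = nn_cond_exp M G (\<lambda>\<omega>. g (Y \<omega>, e \<omega>)) \<omega>"
  proof (rule nn_cond_exp_charact)
    fix A assume [measurable]: "A \<in> sets G"
    then have [measurable]: "A \<in> sets M" using sub by (meson subalgebra_def subsetD)
    \<comment> \<open>\<open>indep_var\<close> needs both variables in one space, so the G-measurable data and e are packed into \<open>real \<times> real\<close>.\<close>
    define W where "W = (\<lambda>\<omega>. (indicator A \<omega> :: real, Y \<omega>))"
    define E where "E = (\<lambda>\<omega>. (e \<omega>, 0 :: real))"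
    define \<phi> where "\<phi> z = ennreal (fst (fst z)) * g (snd (fst z), fst (snd z))" for z :: "(real \<times> real) \<times> real \<times> real"
    have "indep_var (borel \<Otimes>\<^sub>M borel) W (borel \<Otimes>\<^sub>M borel) E"
      unfolding W_def E_def by (rule indep_var_subalgebra_embedding[OF sub indep]) measurable
    then have "(\<integral>\<^sup>+\<omega>. \<phi> (W \<omega>, E \<omega>) \<partial>M) = (\<integral>\<^sup>+\<omega>. \<integral>\<^sup>+z. \<phi> (W \<omega>, z) \<partial>distr M (borel \<Otimes>\<^sub>M borel) E \<partial>M)"
      by (rule nn_integral_indep_var) (simp add: \<phi>_def)
    moreover have "(\<integral>\<^sup>+z. \<phi> (W \<omega>, z) \<partial>distr M (borel \<Otimes>\<^sub>M borel) E) = \<psi> (Y \<omega>) * indicator A \<omega>" for \<omega>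
    proof -
      have "(\<integral>\<^sup>+z. \<phi> (W \<omega>, z) \<partial>distr M (borel \<Otimes>\<^sub>M borel) E) = (\<integral>\<^sup>+\<omega>'. \<phi> (W \<omega>, E \<omega>') \<partial>M)"
        by (rule nn_integral_distr) (simp_all add: \<phi>_def E_def)
      also have "\<dots> = (\<integral>\<^sup>+x. ennreal (indicator A \<omega>) * g (Y \<omega>, x) \<partial>?N)"
        by (subst nn_integral_distr) (simp_all add: \<phi>_def W_def E_def)
      also have "\<dots> = ennreal (indicator A \<omega>) * \<psi> (Y \<omega>)"
        unfolding \<psi>_def by (rule nn_integral_cmult) simp
      finally show ?thesis by (simp add: mult.commute split: split_indicator)
    qed
    moreover have "\<phi> (W \<omega>, E \<omega>) = g (Y \<omega>, e \<omega>) * indicator A \<omega>" for \<omega>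
      by (simp add: \<phi>_def W_def E_def split: split_indicator)
    ultimately show "(\<integral>\<^sup>+\<omega>\<in>A. g (Y \<omega>, e \<omega>) \<partial>M) = (\<integral>\<^sup>+\<omega>\<in>A. \<psi> (Y \<omega>) \<partial>M)" by simp
  qed auto
  then show ?thesis unfolding \<psi>_def by (auto elim: AE_mp)
qed

lemma nn_cond_exp_return_leverage_step:
  fixes M F G :: "'a measure" and R e \<Theta> :: "'a \<Rightarrow> real" and z lam b \<gamma> c r \<delta> \<theta> :: real
  assumes "prob_space M" and sub_G: "subalgebra M G" and sub_F: "subalgebra G F"
    and R[measurable]: "R \<in> borel_measurable G" and R_pos: "\<And>\<omega>. \<omega> \<in> space M \<Longrightarrow> R \<omega> > 0"
    and e[measurable]: "e \<in> borel_measurable M"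
    and indep: "prob_space.indep_set M (sets G) (rv_events M e)"
    and normal: "distributed M lborel e std_normal_density"
    and cond_law: "\<And>B. B \<in> sets borel \<Longrightarrow>
      AE \<omega> in M. nn_cond_exp M F (indicator (R -` B \<inter> space M)) \<omega> = emeasure (ncgamma \<delta> (\<Theta> \<omega>) \<theta>) B"
    and \<Theta>: "\<And>\<omega>. \<omega> \<in> space M \<Longrightarrow> \<Theta> \<omega> \<ge> 0"
    and \<delta>: "\<delta> > 0" and \<theta>: "\<theta> > 0" and c: "1 - 2 * c > 0"
  defines "X \<equiv> z * lam + b + ((1/2) * z\<^sup>2 + \<gamma>\<^sup>2 * c - 2 * c * \<gamma> * z) / (1 - 2 * c)"
  assumes X: "\<theta> * X < 1"
  shows "AE \<omega> in M. nn_cond_exp M F (\<lambda>\<omega>. ennreal (exp (z * r + (z * lam + b) * R \<omega> + z * sqrt (R \<omega>) * e \<omega>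
                                                  + c * (e \<omega> - \<gamma> * sqrt (R \<omega>))\<^sup>2))) \<omega>
     = ennreal (exp (z * r - ln (1 - 2 * c) / 2 - \<delta> * ncg_w X \<theta> + \<Theta> \<omega> * ncg_v X \<theta>))"
proof -
  interpret prob_space M by fact
  have "subalgebra M F" using sub_G sub_F by (auto simp: subalgebra_def)
  then interpret finite_measure_subalgebra M F by unfold_locales
  have [measurable]: "R \<in> borel_measurable M" by (rule measurable_from_subalg[OF sub_G R])
  define g where "g = (\<lambda>(y, x). ennreal (exp (z * r + (z * lam + b) * y + z * sqrt y * x + c * (x - \<gamma> * sqrt y)\<^sup>2)))"
  have g_meas[measurable]: "g \<in> borel_measurable (borel \<Otimes>\<^sub>M borel)" unfolding g_def by measurable
  define h where "h y = ennreal (exp (z * r - ln (1 - 2 * c) / 2 + X * y))" for y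
  have [measurable]: "h \<in> borel_measurable borel" unfolding h_def by measurable
  have integral_h: "(\<integral>\<^sup>+x. h x \<partial>ncgamma \<delta> (\<Theta> \<omega>) \<theta>)
      = ennreal (exp (z * r - ln (1 - 2 * c) / 2 - \<delta> * ncg_w X \<theta> + \<Theta> \<omega> * ncg_v X \<theta>))"
    if "\<omega> \<in> space M" for \<omega>
    unfolding h_def by (rule nn_integral_ncgamma_exp_affine[OF \<delta> \<theta> \<Theta>[OF that] X])
  have law_e: "distr M borel e = density lborel std_normal_density"
    using normal by (simp add: distributed_def cong: distr_cong)
  have "AE \<omega> in M. nn_cond_exp M G (\<lambda>\<omega>. g (R \<omega>, e \<omega>)) \<omega> = h (R \<omega>)"
    using nn_cond_exp_indep_freeze[OF \<open>prob_space M\<close> sub_G R e indep g_meas] AE_space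
  proof eventually_elim
    case (elim \<omega>)
    then show ?case
      using R_pos[of \<omega>] c nn_integral_std_normal_return_leverage[of "R \<omega>" c z r lam b \<gamma>]
      by (simp add: g_def h_def X_def law_e)
  qed
  then have "AE \<omega> in M. nn_cond_exp M F (\<lambda>\<omega>. g (R \<omega>, e \<omega>)) \<omega> = nn_cond_exp M F (\<lambda>\<omega>. h (R \<omega>)) \<omega>"
    using nn_cond_exp_nested_subalg[OF sub_G sub_F, of "\<lambda>\<omega>. g (R \<omega>, e \<omega>)"]
      nn_cond_exp_cong[of "nn_cond_exp M G (\<lambda>\<omega>. g (R \<omega>, e \<omega>))" "\<lambda>\<omega>. h (R \<omega>)"]
    by (auto elim!: AE_mp)
  moreover have "AE \<omega> in M. nn_cond_exp M F (\<lambda>\<omega>. h (R \<omega>)) \<omega> = (\<integral>\<^sup>+x. h x \<partial>ncgamma \<delta> (\<Theta> \<omega>) \<theta>)"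
    by (rule nn_cond_exp_kernel_comp[OF _ _ cond_law]) (auto simp: ncgamma_def)
  ultimately show ?thesis
    using AE_space by eventually_elim (simp add: g_def integral_h)
qed

section \<open>The LHARG model\<close>

lemma sum_atLeastAtMost_split_first:
  fixes g :: "nat \<Rightarrow> 'b::comm_monoid_add"
  assumes "p \<ge> 1"
  shows "(\<Sum>i=1..p. g i) = g 1 + (\<Sum>i=1..<p. g (i + 1))"
proof -
  obtain p' where p: "p = Suc p'" using assms by (cases p) auto
  have "(\<Sum>i=1..p. g i) = g 1 + (\<Sum>i=Suc 1..Suc p'. g i)"
    by (simp add: p sum.atLeast_Suc_atMost add.assoc)
  also have "(\<Sum>i=Suc 1..Suc p'. g i) = (\<Sum>i=1..p'. g (Suc i))"
    by (rule sum.shift_bounds_cl_Suc_ivl)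
  also have "\<dots> = (\<Sum>i=1..<p. g (i + 1))"
    by (simp add: p atLeastLessThanSuc_atLeastAtMost)
  finally show ?thesis .
qed

lemma sum_lag_recursion:
  fixes B B' \<beta> f :: "nat \<Rightarrow> real"
  assumes "p \<ge> 1"
    and B': "\<And>i. B' i = (if 1 \<le> i \<and> i < p then B (i + 1) + v * \<beta> i else if i = p then v * \<beta> p else 0)"
  shows "(\<Sum>i=1..<p. B (i + 1) * f i) + v * (\<Sum>i=1..p. \<beta> i * f i) = (\<Sum>i=1..p. B' i * f i)"
proof -
  have last: "(\<Sum>i=1..p. h i) = (\<Sum>i=1..<p. h i) + h p" for h :: "nat \<Rightarrow> real"
    using assms(1) by (cases p) (auto simp: sum.cl_ivl_Suc atLeastLessThanSuc_atLeastAtMost)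
  have "(\<Sum>i=1..<p. B' i * f i) = (\<Sum>i=1..<p. (B (i + 1) + v * \<beta> i) * f i)"
    by (rule sum.cong) (auto simp: B')
  then have "(\<Sum>i=1..p. B' i * f i) = (\<Sum>i=1..<p. (B (i + 1) + v * \<beta> i) * f i) + v * \<beta> p * f p"
    unfolding last[of "\<lambda>i. B' i * f i"] by (simp add: B')
  then show ?thesis
    unfolding last[of "\<lambda>i. \<beta> i * f i"] by (simp add: sum_distrib_left sum.distrib algebra_simps)
qed

lemma rv_events_subset_sets: "X \<in> borel_measurable M \<Longrightarrow> rv_events M X \<subseteq> sets M"
  unfolding rv_events_def by (auto intro: measurable_sets)

lemma subalgebra_sigma:
  assumes "A \<subseteq> sets M"
  shows "subalgebra M (sigma (space M) A)"
proof -
  have "A \<subseteq> Pow (space M)" using assms sets.sets_into_space by blast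
  then show ?thesis
    using sets.sigma_sets_subset[OF assms] by (simp add: subalgebra_def sets_measure_of space_measure_of_conv)
qed

lemma subalgebra_sigma_mono:
  assumes "A \<subseteq> B" "B \<subseteq> Pow \<Omega>"
  shows "subalgebra (sigma \<Omega> B) (sigma \<Omega> A)"
  using assms sigma_sets_mono'[OF assms(1)]
  by (simp add: subalgebra_def sets_measure_of space_measure_of_conv)

lemma measurable_sigma_rv_events:
  assumes "rv_events M X \<subseteq> A" "A \<subseteq> Pow (space M)"
  shows "X \<in> borel_measurable (sigma (space M) A)"
proof (rule measurableI)
  fix B :: "real set" assume "B \<in> sets borel"
  then have "X -` B \<inter> space M \<in> A" using assms(1) unfolding rv_events_def by auto
  then show "X -` B \<inter> space (sigma (space M) A) \<in> sets (sigma (space M) A)"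
    using assms(2) by (simp add: sets_measure_of space_measure_of_conv)
qed simp

locale lharg_model = prob_space M
  for M :: "'a measure" +
  fixes eps RV S :: "int \<Rightarrow> 'a \<Rightarrow> real"
    and r lam \<delta> \<theta> d \<gamma> :: real
    and p q :: nat
    and \<beta> \<alpha> :: "nat \<Rightarrow> real"
  assumes par: "\<delta> > 0" "\<theta> > 0" "d \<ge> 0" "p \<ge> 1" "q \<ge> 1"
    and beta_nn: "\<And>i. 1 \<le> i \<Longrightarrow> i \<le> p \<Longrightarrow> \<beta> i \<ge> 0"
    and alpha_nn: "\<And>j. 1 \<le> j \<Longrightarrow> j \<le> q \<Longrightarrow> \<alpha> j \<ge> 0"
    and eps_meas[measurable]: "\<And>u. eps u \<in> borel_measurable M"
    and RV_meas[measurable]: "\<And>u. RV u \<in> borel_measurable M"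
    and eps_normal: "\<And>u. distributed M lborel (eps u) std_normal_density"
    and RV_pos: "\<And>u \<omega>. \<omega> \<in> space M \<Longrightarrow> RV u \<omega> > 0"
    and S_pos: "\<And>u \<omega>. \<omega> \<in> space M \<Longrightarrow> S u \<omega> > 0"
    and S_ret: "\<And>u \<omega>. \<omega> \<in> space M \<Longrightarrow>
        ln (S (u + 1) \<omega> / S u \<omega>) = r + lam * RV (u + 1) \<omega> + sqrt (RV (u + 1) \<omega>) * eps (u + 1) \<omega>"
    and eps_indep_past: "\<And>u. indep_set
        (sets (sigma (space M) (sets (lharg_filtration M eps RV u) \<union> rv_events M (RV (u + 1)))))
        (rv_events M (eps (u + 1)))"
    and RV_cond_law: "\<And>u B. B \<in> sets borel \<Longrightarrow>
        AE \<omega> in M. nn_cond_exp M (lharg_filtration M eps RV u) (indicator (RV (u + 1) -` B \<inter> space M)) \<omega>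
                 = emeasure (ncgamma \<delta> (lharg_Theta d \<gamma> p q \<beta> \<alpha> eps RV u \<omega>) \<theta>) B"
begin

abbreviation "\<F> \<equiv> lharg_filtration M eps RV"

definition filtration_generator :: "int \<Rightarrow> 'a set set" where
  "filtration_generator u = (\<Union>v\<in>{..u}. rv_events M (eps v) \<union> rv_events M (RV v))"

lemma filtration_generator_subset: "filtration_generator u \<subseteq> sets M"
  unfolding filtration_generator_def using rv_events_subset_sets[OF eps_meas] rv_events_subset_sets[OF RV_meas]
  by blast

lemma filtration_eq: "\<F> u = sigma (space M) (filtration_generator u)"
  unfolding lharg_filtration_def filtration_generator_def ..

lemma subalgebra_filtration: "subalgebra M (\<F> u)"
  unfolding filtration_eq by (rule subalgebra_sigma[OF filtration_generator_subset])

lemma sigma_finite_subalgebra_filtration: "sigma_finite_subalgebra M (\<F> u)"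
proof -
  interpret finite_measure_subalgebra M "\<F> u" by unfold_locales (rule subalgebra_filtration)
  show ?thesis ..
qed

lemma subalgebra_filtration_mono:
  assumes "u \<le> u'"
  shows "subalgebra (\<F> u') (\<F> u)"
proof -
  have "filtration_generator u \<subseteq> filtration_generator u'"
    using assms by (force simp: filtration_generator_def)
  moreover have "filtration_generator u' \<subseteq> Pow (space M)"
    using filtration_generator_subset sets.sets_into_space by blast
  ultimately show ?thesis unfolding filtration_eq by (rule subalgebra_sigma_mono)
qed

lemma measurable_filtration:
  assumes "v \<le> u"
  shows "eps v \<in> borel_measurable (\<F> u)" and "RV v \<in> borel_measurable (\<F> u)"
    and "leverage \<gamma> eps RV v \<in> borel_measurable (\<F> u)"
proof -
  have gen: "filtration_generator u \<subseteq> Pow (space M)"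
    using filtration_generator_subset sets.sets_into_space by blast
  have "rv_events M (eps v) \<subseteq> filtration_generator u" "rv_events M (RV v) \<subseteq> filtration_generator u"
    using assms by (auto simp: filtration_generator_def)
  then show eps: "eps v \<in> borel_measurable (\<F> u)" and RV: "RV v \<in> borel_measurable (\<F> u)"
    unfolding filtration_eq by (auto intro: measurable_sigma_rv_events[OF _ gen])
  show "leverage \<gamma> eps RV v \<in> borel_measurable (\<F> u)"
    unfolding leverage_def[abs_def] using eps RV by measurable
qed


definition \<G> :: "int \<Rightarrow> 'a measure" where
  "\<G> u = sigma (space M) (sets (\<F> u) \<union> rv_events M (RV (u + 1)))"

lemma
  shows subalgebra_\<G>: "subalgebra M (\<G> u)"
    and subalgebra_\<G>_\<F>: "subalgebra (\<G> u) (\<F> u)"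
    and RV_measurable_\<G>: "RV (u + 1) \<in> borel_measurable (\<G> u)"
proof -
  have gen: "sets (\<F> u) \<union> rv_events M (RV (u + 1)) \<subseteq> sets M"
    using subalgebra_filtration[of u] rv_events_subset_sets[OF RV_meas] by (auto simp: subalgebra_def)
  then have gen_Pow: "sets (\<F> u) \<union> rv_events M (RV (u + 1)) \<subseteq> Pow (space M)"
    using sets.sets_into_space by blast
  show "subalgebra M (\<G> u)" unfolding \<G>_def by (rule subalgebra_sigma[OF gen])
  show "subalgebra (\<G> u) (\<F> u)"
    using subalgebra_filtration[of u] gen_Pow
    by (auto simp: \<G>_def subalgebra_def sets_measure_of space_measure_of_conv)
  show "RV (u + 1) \<in> borel_measurable (\<G> u)"
    unfolding \<G>_def by (rule measurable_sigma_rv_events[OF _ gen_Pow]) auto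
qed

lemma Theta_nonneg: "\<omega> \<in> space M \<Longrightarrow> lharg_Theta d \<gamma> p q \<beta> \<alpha> eps RV u \<omega> \<ge> 0"
  unfolding lharg_Theta_def leverage_def using par beta_nn alpha_nn RV_pos[THEN less_imp_le]
  by (intro add_nonneg_nonneg sum_nonneg mult_nonneg_nonneg) auto

definition log_return :: "int \<Rightarrow> 'a \<Rightarrow> real" where
  "log_return u \<omega> = r + lam * RV (u + 1) \<omega> + sqrt (RV (u + 1) \<omega>) * eps (u + 1) \<omega>"

lemma log_return_measurable[measurable]: "log_return u \<in> borel_measurable M"
  unfolding log_return_def[abs_def] by measurable

lemma ln_price_ratio_eq_sum:
  assumes \<omega>: "\<omega> \<in> space M" and "t \<le> T"
  shows "ln (S T \<omega> / S t \<omega>) = (\<Sum>u\<in>{t..<T}. log_return u \<omega>)"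
  using \<open>t \<le> T\<close>
proof (induction t rule: int_le_induct)
  case base
  then show ?case using S_pos[OF \<omega>] by simp
next
  case (step t)
  have "ln (S T \<omega> / S (t - 1) \<omega>) = ln (S t \<omega> / S (t - 1) \<omega> * (S T \<omega> / S t \<omega>))"
    using S_pos[OF \<omega>, of t] by simp
  also have "\<dots> = ln (S t \<omega> / S (t - 1) \<omega>) + ln (S T \<omega> / S t \<omega>)"
    using S_pos[OF \<omega>] by (intro ln_mult_pos) simp_all
  also have "ln (S t \<omega> / S (t - 1) \<omega>) = log_return (t - 1) \<omega>"
    using S_ret[OF \<omega>, of "t - 1"] by (simp add: log_return_def)
  also have "{t - 1..<T} = insert (t - 1) {t..<T}" using step.hyps by auto
  ultimately show ?case using step.IH by simp
qed

abbreviation coef :: "real \<Rightarrow> nat \<Rightarrow> real \<times> (nat \<Rightarrow> real) \<times> (nat \<Rightarrow> real)" where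
  "coef \<equiv> lharg_coef r lam \<delta> \<theta> d \<gamma> p q \<beta> \<alpha>"

text \<open>The logarithm of the conditional moment generating function at time s, for coefficients c = (A, B, C).\<close>
definition exponent :: "real \<times> (nat \<Rightarrow> real) \<times> (nat \<Rightarrow> real) \<Rightarrow> int \<Rightarrow> 'a \<Rightarrow> real" where
  "exponent c s \<omega> = fst c + (\<Sum>i=1..p. fst (snd c) i * RV (s + 1 - int i) \<omega>)
                          + (\<Sum>j=1..q. snd (snd c) j * leverage \<gamma> eps RV (s + 1 - int j) \<omega>)"

lemma exponent_measurable[measurable]: "exponent c s \<in> borel_measurable M"
  unfolding exponent_def[abs_def] leverage_def[abs_def] by measurable

definition known_exponent :: "real \<times> (nat \<Rightarrow> real) \<times> (nat \<Rightarrow> real) \<Rightarrow> int \<Rightarrow> 'a \<Rightarrow> real" where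
  "known_exponent c s \<omega> = fst c + (\<Sum>i=1..<p. fst (snd c) (i + 1) * RV (s + 1 - int i) \<omega>)
                                + (\<Sum>j=1..<q. snd (snd c) (j + 1) * leverage \<gamma> eps RV (s + 1 - int j) \<omega>)"

lemma exponent_next_eq:
  "exponent c (s + 1) \<omega> = known_exponent c s \<omega>
     + fst (snd c) 1 * RV (s + 1) \<omega> + snd (snd c) 1 * leverage \<gamma> eps RV (s + 1) \<omega>"
  unfolding exponent_def known_exponent_def
  using sum_atLeastAtMost_split_first[OF par(4), of "\<lambda>i. fst (snd c) i * RV (s + 1 + 1 - int i) \<omega>"]
    sum_atLeastAtMost_split_first[OF par(5), of "\<lambda>j. snd (snd c) j * leverage \<gamma> eps RV (s + 1 + 1 - int j) \<omega>"]
  by (simp add: algebra_simps)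

lemma known_exponent_measurable: "known_exponent c s \<in> borel_measurable (\<F> s)"
  unfolding known_exponent_def[abs_def]
  by (intro borel_measurable_add borel_measurable_sum borel_measurable_times borel_measurable_const
      measurable_filtration) auto

lemma known_exponent_coef_step:
  "known_exponent (coef z k) s \<omega>
     + (z * r - ln (1 - 2 * snd (snd (coef z k)) 1) / 2 - \<delta> * ncg_w (lharg_X lam \<gamma> z (coef z k)) \<theta>
        + lharg_Theta d \<gamma> p q \<beta> \<alpha> eps RV s \<omega> * ncg_v (lharg_X lam \<gamma> z (coef z k)) \<theta>)
   = exponent (coef z (Suc k)) s \<omega>"
proof -
  define v where "v = ncg_v (lharg_X lam \<gamma> z (coef z k)) \<theta>"
  have "(\<Sum>i=1..<p. fst (snd (coef z k)) (i + 1) * RV (s + 1 - int i) \<omega>) + v * (\<Sum>i=1..p. \<beta> i * RV (s + 1 - int i) \<omega>)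
      = (\<Sum>i=1..p. fst (snd (coef z (Suc k))) i * RV (s + 1 - int i) \<omega>)"
    by (rule sum_lag_recursion[OF par(4)]) (simp add: v_def Let_def)
  moreover have "(\<Sum>j=1..<q. snd (snd (coef z k)) (j + 1) * leverage \<gamma> eps RV (s + 1 - int j) \<omega>)
        + v * (\<Sum>j=1..q. \<alpha> j * leverage \<gamma> eps RV (s + 1 - int j) \<omega>)
      = (\<Sum>j=1..q. snd (snd (coef z (Suc k))) j * leverage \<gamma> eps RV (s + 1 - int j) \<omega>)"
    by (rule sum_lag_recursion[OF par(5)]) (simp add: v_def Let_def)
  ultimately show ?thesis
    by (simp add: exponent_def known_exponent_def lharg_Theta_def v_def[symmetric] Let_def algebra_simps)
qed


lemma nn_cond_exp_coef_step:
  assumes c: "1 - 2 * snd (snd (coef z k)) 1 > 0" and X: "\<theta> * lharg_X lam \<gamma> z (coef z k) < 1"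
  shows "AE \<omega> in M. nn_cond_exp M (\<F> s) (\<lambda>\<omega>. ennreal (exp (z * log_return s \<omega> + exponent (coef z k) (s + 1) \<omega>))) \<omega>
       = ennreal (exp (exponent (coef z (Suc k)) s \<omega>))"
proof -
  interpret sigma_finite_subalgebra M "\<F> s" by (rule sigma_finite_subalgebra_filtration)
  define b where "b = fst (snd (coef z k)) 1"
  define c where "c = snd (snd (coef z k)) 1"
  define Q where "Q \<omega> = ennreal (exp (z * r + (z * lam + b) * RV (s + 1) \<omega> + z * sqrt (RV (s + 1) \<omega>) * eps (s + 1) \<omega>
                                     + c * (eps (s + 1) \<omega> - \<gamma> * sqrt (RV (s + 1) \<omega>))\<^sup>2))" for \<omega>
  have [measurable]: "Q \<in> borel_measurable M" unfolding Q_def by measurable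
  have [measurable]: "known_exponent (coef z k) s \<in> borel_measurable (\<F> s)"
    by (rule known_exponent_measurable)
  have X_eq: "lharg_X lam \<gamma> z (coef z k) = z * lam + b + ((1/2) * z\<^sup>2 + \<gamma>\<^sup>2 * c - 2 * c * \<gamma> * z) / (1 - 2 * c)"
    by (cases "coef z k") (simp add: lharg_X_def b_def c_def)
  have split: "ennreal (exp (z * log_return s \<omega> + exponent (coef z k) (s + 1) \<omega>))
      = ennreal (exp (known_exponent (coef z k) s \<omega>)) * Q \<omega>" for \<omega>
    unfolding exponent_next_eq Q_def
    by (simp add: log_return_def leverage_def b_def c_def exp_add[symmetric] ennreal_mult[symmetric] algebra_simps)
  have "AE \<omega> in M. ennreal (exp (known_exponent (coef z k) s \<omega>)) * nn_cond_exp M (\<F> s) Q \<omega>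
      = nn_cond_exp M (\<F> s) (\<lambda>\<omega>. ennreal (exp (known_exponent (coef z k) s \<omega>)) * Q \<omega>) \<omega>"
    by (rule nn_cond_exp_prod) measurable
  then have "AE \<omega> in M. nn_cond_exp M (\<F> s) (\<lambda>\<omega>. ennreal (exp (z * log_return s \<omega> + exponent (coef z k) (s + 1) \<omega>))) \<omega>
      = ennreal (exp (known_exponent (coef z k) s \<omega>)) * nn_cond_exp M (\<F> s) Q \<omega>"
    by eventually_elim (simp add: split)
  moreover have "AE \<omega> in M. nn_cond_exp M (\<F> s) Q \<omega>
      = ennreal (exp (z * r - ln (1 - 2 * c) / 2 - \<delta> * ncg_w (lharg_X lam \<gamma> z (coef z k)) \<theta>
                      + lharg_Theta d \<gamma> p q \<beta> \<alpha> eps RV s \<omega> * ncg_v (lharg_X lam \<gamma> z (coef z k)) \<theta>))"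
    unfolding Q_def X_eq
    using prob_space_axioms subalgebra_\<G> subalgebra_\<G>_\<F> RV_measurable_\<G> RV_pos eps_meas
      eps_indep_past[unfolded \<G>_def[symmetric]] eps_normal RV_cond_law Theta_nonneg par(1,2) c X
    by (intro nn_cond_exp_return_leverage_step) (simp_all add: c_def X_eq)
  ultimately show ?thesis
    unfolding known_exponent_coef_step[symmetric] c_def[symmetric]
    by eventually_elim (simp add: ennreal_mult[symmetric] exp_add[symmetric])
qed


lemma nn_cond_exp_mgf_backward:
  assumes "\<And>k. k < n \<Longrightarrow> 1 - 2 * snd (snd (coef z k)) 1 > 0"
    and "\<And>k. k < n \<Longrightarrow> \<theta> * lharg_X lam \<gamma> z (coef z k) < 1"
  shows "AE \<omega> in M. nn_cond_exp M (\<F> (T - int n)) (\<lambda>\<omega>. ennreal (exp (z * (\<Sum>u\<in>{T - int n..<T}. log_return u \<omega>)))) \<omega>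
       = ennreal (exp (exponent (coef z n) (T - int n) \<omega>))"
  using assms
proof (induction n)
  case 0
  interpret sigma_finite_subalgebra M "\<F> T" by (rule sigma_finite_subalgebra_filtration)
  have "AE \<omega> in M. 1 = nn_cond_exp M (\<F> T) (\<lambda>_. 1) \<omega>" by (rule nn_cond_exp_F_meas) simp
  then show ?case by (simp add: exponent_def)
next
  case (Suc n)
  define s where "s = T - int (Suc n)"
  have s1: "T - int n = s + 1" by (simp add: s_def)
  interpret sigma_finite_subalgebra M "\<F> (s + 1)" by (rule sigma_finite_subalgebra_filtration)
  define Y where "Y \<omega> = ennreal (exp (z * log_return s \<omega>))" for \<omega>
  define Z where "Z \<omega> = ennreal (exp (z * (\<Sum>u\<in>{s + 1..<T}. log_return u \<omega>)))" for \<omega>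
  have [measurable]: "RV (s + 1) \<in> borel_measurable (\<F> (s + 1))" "eps (s + 1) \<in> borel_measurable (\<F> (s + 1))"
    by (simp_all add: measurable_filtration)
  have Y_meas_\<F>[measurable]: "Y \<in> borel_measurable (\<F> (s + 1))"
    unfolding Y_def log_return_def by measurable
  have [measurable]: "Y \<in> borel_measurable M"
    by (rule measurable_from_subalg[OF subalgebra_filtration Y_meas_\<F>])
  have [measurable]: "Z \<in> borel_measurable M" unfolding Z_def by measurable
  have YZ_meas: "(\<lambda>\<omega>. Y \<omega> * Z \<omega>) \<in> borel_measurable M" by measurable
  have "{s..<T} = insert s {s + 1..<T}" using s1 by auto
  then have split: "ennreal (exp (z * (\<Sum>u\<in>{s..<T}. log_return u \<omega>))) = Y \<omega> * Z \<omega>" for \<omega>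
    by (simp add: Y_def Z_def distrib_left exp_add ennreal_mult)
  have IH: "AE \<omega> in M. nn_cond_exp M (\<F> (s + 1)) Z \<omega> = ennreal (exp (exponent (coef z n) (s + 1) \<omega>))"
    using Suc unfolding Z_def s1[symmetric] by simp
  have "AE \<omega> in M. Y \<omega> * nn_cond_exp M (\<F> (s + 1)) Z \<omega> = nn_cond_exp M (\<F> (s + 1)) (\<lambda>\<omega>. Y \<omega> * Z \<omega>) \<omega>"
    by (rule nn_cond_exp_prod) measurable
  with IH have "AE \<omega> in M. nn_cond_exp M (\<F> (s + 1)) (\<lambda>\<omega>. Y \<omega> * Z \<omega>) \<omega>
      = ennreal (exp (z * log_return s \<omega> + exponent (coef z n) (s + 1) \<omega>))"
    by eventually_elim (simp add: Y_def exp_add ennreal_mult)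
  then have "AE \<omega> in M. nn_cond_exp M (\<F> s) (nn_cond_exp M (\<F> (s + 1)) (\<lambda>\<omega>. Y \<omega> * Z \<omega>)) \<omega>
      = nn_cond_exp M (\<F> s) (\<lambda>\<omega>. ennreal (exp (z * log_return s \<omega> + exponent (coef z n) (s + 1) \<omega>))) \<omega>"
    by (rule sigma_finite_subalgebra.nn_cond_exp_cong[OF sigma_finite_subalgebra_filtration]) measurable
  moreover have "AE \<omega> in M. nn_cond_exp M (\<F> s) (\<lambda>\<omega>. Y \<omega> * Z \<omega>) \<omega>
      = nn_cond_exp M (\<F> s) (nn_cond_exp M (\<F> (s + 1)) (\<lambda>\<omega>. Y \<omega> * Z \<omega>)) \<omega>"
    by (rule sigma_finite_subalgebra.nn_cond_exp_nested_subalg[OF sigma_finite_subalgebra_filtration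
        subalgebra_filtration subalgebra_filtration_mono[of s "s + 1"] YZ_meas]) simp
  moreover have "AE \<omega> in M. nn_cond_exp M (\<F> s) (\<lambda>\<omega>. ennreal (exp (z * log_return s \<omega> + exponent (coef z n) (s + 1) \<omega>))) \<omega>
      = ennreal (exp (exponent (coef z (Suc n)) s \<omega>))"
    using Suc.prems by (intro nn_cond_exp_coef_step) auto
  ultimately show ?case
    unfolding s_def[symmetric] split by eventually_elim simp
qed

lemma nn_cond_exp_price_mgf:
  assumes "t \<le> T"
    and "\<And>k. k < nat (T - t) \<Longrightarrow> 1 - 2 * snd (snd (coef z k)) 1 > 0"
    and "\<And>k. k < nat (T - t) \<Longrightarrow> \<theta> * lharg_X lam \<gamma> z (coef z k) < 1"
  shows "AE \<omega> in M. nn_cond_exp M (\<F> t) (\<lambda>\<omega>. ennreal (exp (z * ln (S T \<omega> / S t \<omega>)))) \<omega>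
       = ennreal (exp (exponent (coef z (nat (T - t))) t \<omega>))"
proof -
  interpret sigma_finite_subalgebra M "\<F> t" by (rule sigma_finite_subalgebra_filtration)
  have t: "T - int (nat (T - t)) = t" using assms(1) by simp
  have "AE \<omega> in M. nn_cond_exp M (\<F> t) (\<lambda>\<omega>. ennreal (exp (z * ln (S T \<omega> / S t \<omega>)))) \<omega>
      = nn_cond_exp M (\<F> t) (\<lambda>\<omega>. ennreal (exp (z * (\<Sum>u\<in>{t..<T}. log_return u \<omega>)))) \<omega>"
  proof (rule nn_cond_exp_cong)
    have ln_eq: "\<omega> \<in> space M \<Longrightarrow> ln (S T \<omega> / S t \<omega>) = (\<Sum>u\<in>{t..<T}. log_return u \<omega>)" for \<omega>
      using assms(1) by (intro ln_price_ratio_eq_sum) auto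
    then show "AE \<omega> in M. ennreal (exp (z * ln (S T \<omega> / S t \<omega>))) = ennreal (exp (z * (\<Sum>u\<in>{t..<T}. log_return u \<omega>)))"
      by simp
    show "(\<lambda>\<omega>. ennreal (exp (z * (\<Sum>u\<in>{t..<T}. log_return u \<omega>)))) \<in> borel_measurable M"
      by measurable
    moreover have "(\<lambda>\<omega>. ennreal (exp (z * ln (S T \<omega> / S t \<omega>)))) \<in> borel_measurable M
        \<longleftrightarrow> (\<lambda>\<omega>. ennreal (exp (z * (\<Sum>u\<in>{t..<T}. log_return u \<omega>)))) \<in> borel_measurable M"
      by (rule measurable_cong) (simp add: ln_eq)
    ultimately show "(\<lambda>\<omega>. ennreal (exp (z * ln (S T \<omega> / S t \<omega>)))) \<in> borel_measurable M" by simp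
  qed
  moreover have "AE \<omega> in M. nn_cond_exp M (\<F> t) (\<lambda>\<omega>. ennreal (exp (z * (\<Sum>u\<in>{t..<T}. log_return u \<omega>)))) \<omega>
      = ennreal (exp (exponent (coef z (nat (T - t))) t \<omega>))"
    using nn_cond_exp_mgf_backward[of "nat (T - t)" z T] assms(2,3) unfolding t by simp
  ultimately show ?thesis by eventually_elim simp
qed

end

theorem proposition2:
  fixes M :: "'a measure"
    and eps RV S :: "int \<Rightarrow> 'a \<Rightarrow> real"
    and r lam \<delta> \<theta> d \<gamma> z :: real
    and p q :: nat
    and \<beta> \<alpha> :: "nat \<Rightarrow> real"
    and t T :: int
  assumes prob: "prob_space M"
    and par: "\<delta> > 0" "\<theta> > 0" "d \<ge> 0" "p \<ge> 1" "q \<ge> 1"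
    and beta_nn: "\<And>i. 1 \<le> i \<Longrightarrow> i \<le> p \<Longrightarrow> \<beta> i \<ge> 0"
    and alpha_nn: "\<And>j. 1 \<le> j \<Longrightarrow> j \<le> q \<Longrightarrow> \<alpha> j \<ge> 0"
    and eps_meas: "\<And>u. eps u \<in> borel_measurable M"
    and RV_meas: "\<And>u. RV u \<in> borel_measurable M"
    and eps_indep: "prob_space.indep_vars M (\<lambda>_. borel) eps UNIV"
    and eps_normal: "\<And>u. distributed M lborel (eps u) std_normal_density"
    and RV_pos: "\<And>u \<omega>. \<omega> \<in> space M \<Longrightarrow> RV u \<omega> > 0"
    and S_pos: "\<And>u \<omega>. \<omega> \<in> space M \<Longrightarrow> S u \<omega> > 0"
    and S_ret: "\<And>u \<omega>. \<omega> \<in> space M \<Longrightarrow>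
        ln (S (u + 1) \<omega> / S u \<omega>) = r + lam * RV (u + 1) \<omega> + sqrt (RV (u + 1) \<omega>) * eps (u + 1) \<omega>"
    and eps_indep_past: "\<And>u. prob_space.indep_set M
        (sets (sigma (space M) (sets (lharg_filtration M eps RV u) \<union> rv_events M (RV (u + 1)))))
        (rv_events M (eps (u + 1)))"
    and RV_cond_law: "\<And>u B. B \<in> sets borel \<Longrightarrow>
        AE \<omega> in M. nn_cond_exp M (lharg_filtration M eps RV u)
                       (indicator (RV (u + 1) -` B \<inter> space M)) \<omega>
                 = emeasure (ncgamma \<delta> (lharg_Theta d \<gamma> p q \<beta> \<alpha> eps RV u \<omega>) \<theta>) B"
    and tT: "t < T"
    and cond1: "\<And>k. k < nat (T - t) \<Longrightarrow>
        1 - 2 * snd (snd (lharg_coef r lam \<delta> \<theta> d \<gamma> p q \<beta> \<alpha> z k)) 1 > 0"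
    and cond2: "\<And>k. k < nat (T - t) \<Longrightarrow>
        \<theta> * lharg_X lam \<gamma> z (lharg_coef r lam \<delta> \<theta> d \<gamma> p q \<beta> \<alpha> z k) < 1"
  shows "AE \<omega> in M.
           nn_cond_exp M (lharg_filtration M eps RV t)
             (\<lambda>\<omega>. ennreal (exp (z * ln (S T \<omega> / S t \<omega>)))) \<omega>
         = ennreal (exp (fst (lharg_coef r lam \<delta> \<theta> d \<gamma> p q \<beta> \<alpha> z (nat (T - t)))
              + (\<Sum>i=1..p. fst (snd (lharg_coef r lam \<delta> \<theta> d \<gamma> p q \<beta> \<alpha> z (nat (T - t)))) i
                              * RV (t + 1 - int i) \<omega>)
              + (\<Sum>j=1..q. snd (snd (lharg_coef r lam \<delta> \<theta> d \<gamma> p q \<beta> \<alpha> z (nat (T - t)))) j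
                              * leverage \<gamma> eps RV (t + 1 - int j) \<omega>)))"
proof -
  interpret lharg_model M eps RV S r lam \<delta> \<theta> d \<gamma> p q \<beta> \<alpha>
    by (intro lharg_model.intro lharg_model_axioms.intro prob)
      (fact par beta_nn alpha_nn eps_meas RV_meas eps_normal RV_pos S_pos S_ret eps_indep_past RV_cond_law)+
  show ?thesis
    using nn_cond_exp_price_mgf[OF less_imp_le[OF tT] cond1 cond2] by (simp add: exponent_def)
qed

end
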